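(* Let $T$ be a tree of order $n$ and dissociation number $\psi$. If $v$ is a leaf of $T$ such that $\psi(T-v)=\psi(T)$, then $\Phi_{\overline{v}}(T)\le \min\{\Phi_v^0(T),\Phi_v^1(T)\}$ and $\Phi_{\overline{v}}(T)\le \frac{1}{3}\Phi(T)$.
   Context: All graphs are finite, simple and undirected. A dissociation set in a graph $G$ is a vertex subset $F$ such that the induced subgraph $G[F]$ has maximum degree at most $1$; a maximum dissociation set is one of maximum cardinality, and the dissociation number $\psi(G)$ is that cardinality. Let $MD(G)$ be the set of all maximum dissociation sets of $G$ and $\Phi(G)=|MD(G)|$. For a vertex $v$: $\Phi_{\overline{v}}(G)=|\{F\in MD(G): v\notin F\}|$, $\Phi_v^0(G)=|\{F\in MD(G): v\in F,\ d_{G[F]}(v)=0\}|$, $\Phi_v^1(G)=|\{F\in MD(G): v\in F,\ d_{G[F]}(v)=1\}|$. A leaf is a vertex of degree exactly one; $T-v$ denotes $T$ with $v$ deleted. *)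

theory Defs
  imports Main
begin

definition simple_graph :: "'a set \<Rightarrow> 'a set set \<Rightarrow> bool" where
  "simple_graph V E \<longleftrightarrow> finite V \<and> (\<forall>e\<in>E. e \<subseteq> V \<and> card e = 2)"

definition adj :: "'a set set \<Rightarrow> 'a \<Rightarrow> 'a \<Rightarrow> bool" where
  "adj E u v \<longleftrightarrow> {u, v} \<in> E"

definition degree :: "'a set set \<Rightarrow> 'a \<Rightarrow> nat" where
  "degree E v = card {e\<in>E. v \<in> e}"

definition is_walk :: "'a set \<Rightarrow> 'a set set \<Rightarrow> 'a list \<Rightarrow> bool" where
  "is_walk V E p \<longleftrightarrow> p \<noteq> [] \<and> set p \<subseteq> V \<and>
     (\<forall>i. Suc i < length p \<longrightarrow> adj E (p ! i) (p ! Suc i))"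

definition connected :: "'a set \<Rightarrow> 'a set set \<Rightarrow> bool" where
  "connected V E \<longleftrightarrow> V \<noteq> {} \<and>
     (\<forall>u\<in>V. \<forall>v\<in>V. \<exists>p. is_walk V E p \<and> hd p = u \<and> last p = v)"

definition is_cycle :: "'a set \<Rightarrow> 'a set set \<Rightarrow> 'a list \<Rightarrow> bool" where
  "is_cycle V E c \<longleftrightarrow> length c \<ge> 3 \<and> distinct c \<and> is_walk V E c \<and> adj E (last c) (hd c)"

definition acyclic_graph :: "'a set \<Rightarrow> 'a set set \<Rightarrow> bool" where
  "acyclic_graph V E \<longleftrightarrow> (\<nexists>c. is_cycle V E c)"

definition tree :: "'a set \<Rightarrow> 'a set set \<Rightarrow> bool" where
  "tree V E \<longleftrightarrow> simple_graph V E \<and> connected V E \<and> acyclic_graph V E"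

definition leaf :: "'a set set \<Rightarrow> 'a \<Rightarrow> bool" where
  "leaf E v \<longleftrightarrow> degree E v = 1"

definition induced_edges :: "'a set set \<Rightarrow> 'a set \<Rightarrow> 'a set set" where
  "induced_edges E F = {e\<in>E. e \<subseteq> F}"

definition delete_vertex_edges :: "'a set set \<Rightarrow> 'a \<Rightarrow> 'a set set" where
  "delete_vertex_edges E v = {e\<in>E. v \<notin> e}"

definition dissociation_set :: "'a set \<Rightarrow> 'a set set \<Rightarrow> 'a set \<Rightarrow> bool" where
  "dissociation_set V E F \<longleftrightarrow> F \<subseteq> V \<and> (\<forall>u\<in>F. degree (induced_edges E F) u \<le> 1)"

definition dissociation_number :: "'a set \<Rightarrow> 'a set set \<Rightarrow> nat" where
  "dissociation_number V E = Max (card ` {F. dissociation_set V E F})"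

definition max_dissociation_sets :: "'a set \<Rightarrow> 'a set set \<Rightarrow> 'a set set" where
  "max_dissociation_sets V E =
     {F. dissociation_set V E F \<and> card F = dissociation_number V E}"

definition Phi :: "'a set \<Rightarrow> 'a set set \<Rightarrow> nat" where
  "Phi V E = card (max_dissociation_sets V E)"

definition Phi_bar :: "'a set \<Rightarrow> 'a set set \<Rightarrow> 'a \<Rightarrow> nat" where
  "Phi_bar V E v = card {F\<in>max_dissociation_sets V E. v \<notin> F}"

definition Phi0 :: "'a set \<Rightarrow> 'a set set \<Rightarrow> 'a \<Rightarrow> nat" where
  "Phi0 V E v = card {F\<in>max_dissociation_sets V E. v \<in> F \<and> degree (induced_edges E F) v = 0}"

definition Phi1 :: "'a set \<Rightarrow> 'a set set \<Rightarrow> 'a \<Rightarrow> nat" where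
  "Phi1 V E v = card {F\<in>max_dissociation_sets V E. v \<in> F \<and> degree (induced_edges E F) v = 1}"

end

theory Submission
  imports Defs
begin

(* A maximum dissociation set F avoiding the leaf v contains the support vertex u of v
   together with exactly one F-neighbour w of u, for otherwise F + v would be a larger
   dissociation set.  Hence F - u + v and F - w + v are maximum dissociation sets in which
   v has degree 0 and 1 respectively.  Both maps are injective: the first obviously, the
   second because sets F1, F2 with the same image but different partners w1, w2 would yield
   the larger dissociation set F1 - {u, w1} + {v, w1, w2}.  Together with
   Phi = Phi_bar + Phi0 + Phi1 this gives both bounds. *)

lemma card_exchange: "finite F \<Longrightarrow> x \<in> F \<Longrightarrow> y \<notin> F \<Longrightarrow> card (insert y (F - {x})) = card F"
  by (metis card_Suc_Diff1 card_insert_disjoint finite_Diff insert_Diff_single insert_absorb insert_iff)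

definition nbr :: "'a set set \<Rightarrow> 'a \<Rightarrow> 'a set" where
  "nbr E x = {y. {x, y} \<in> E}"

lemma nbr_sym: "y \<in> nbr E x \<longleftrightarrow> x \<in> nbr E y"
  by (simp add: nbr_def insert_commute)

lemma nbr_irrefl: "simple_graph V E \<Longrightarrow> x \<notin> nbr E x"
  unfolding nbr_def simple_graph_def by force

lemma degree_eq_card_nbr:
  assumes "\<forall>e\<in>E. card e = 2"
  shows "degree E x = card (nbr E x)"
proof -
  have edges: "{e\<in>E. x \<in> e} = (\<lambda>y. {x, y}) ` nbr E x"
  proof (intro equalityI subsetI)
    fix e assume "e \<in> {e\<in>E. x \<in> e}"
    moreover from this obtain a b where "e = {a, b}" using assms by (auto simp: card_2_iff)
    ultimately show "e \<in> (\<lambda>y. {x, y}) ` nbr E x" by (auto simp: nbr_def insert_commute)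
  qed (auto simp: nbr_def)
  have "x \<notin> nbr E x" using assms by (auto simp: nbr_def)
  then have "inj_on (\<lambda>y. {x, y}) (nbr E x)"
    by (auto intro!: inj_onI simp: doubleton_eq_iff)
  then show ?thesis by (simp add: degree_def edges card_image)
qed

lemma nbr_induced_edges: "x \<in> F \<Longrightarrow> nbr (induced_edges E F) x = F \<inter> nbr E x"
  by (auto simp: nbr_def induced_edges_def)

lemma degree_induced_edges:
  assumes "simple_graph V E" and "x \<in> F"
  shows "degree (induced_edges E F) x = card (F \<inter> nbr E x)"
proof -
  have "\<forall>e\<in>induced_edges E F. card e = 2"
    using assms(1) by (simp add: simple_graph_def induced_edges_def)
  then show ?thesis by (simp add: degree_eq_card_nbr nbr_induced_edges assms(2))
qed

lemma dissociation_set_iff: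
  assumes "simple_graph V E"
  shows "dissociation_set V E F \<longleftrightarrow> F \<subseteq> V \<and> (\<forall>x\<in>F. card (F \<inter> nbr E x) \<le> 1)"
  using degree_induced_edges[OF assms] by (auto simp: dissociation_set_def)

lemma dissociation_set_finite:
  "simple_graph V E \<Longrightarrow> dissociation_set V E F \<Longrightarrow> finite F"
  unfolding simple_graph_def dissociation_set_def using finite_subset by blast

lemma dissociation_set_subset:
  assumes G: "simple_graph V E" and F: "dissociation_set V E F" and "F' \<subseteq> F"
  shows "dissociation_set V E F'"
proof -
  have "card (F' \<inter> nbr E x) \<le> card (F \<inter> nbr E x)" for x
    using dissociation_set_finite[OF G F] \<open>F' \<subseteq> F\<close> by (intro card_mono) auto
  with F \<open>F' \<subseteq> F\<close> show ?thesis
    unfolding dissociation_set_iff[OF G] by (meson order_trans subset_iff)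
qed

lemma dissociation_set_insert:
  assumes G: "simple_graph V E" and F: "dissociation_set V E F" and "x \<in> V"
    and x_deg: "card (F \<inter> nbr E x) \<le> 1"
    and nbrs_isolated: "\<forall>y\<in>F \<inter> nbr E x. F \<inter> nbr E y = {}"
  shows "dissociation_set V E (insert x F)"
  unfolding dissociation_set_iff[OF G]
proof (intro conjI ballI)
  show "insert x F \<subseteq> V" using F \<open>x \<in> V\<close> by (simp add: dissociation_set_def)
next
  fix z assume z: "z \<in> insert x F"
  consider "z = x" | "z \<in> F \<inter> nbr E x" | "z \<in> F" "z \<notin> nbr E x" using z by blast
  then show "card (insert x F \<inter> nbr E z) \<le> 1"
  proof cases
    case 1
    then show ?thesis using x_deg nbr_irrefl[OF G, of x] by simp
  next
    case 2
    then have "insert x F \<inter> nbr E z = {x}" using nbrs_isolated nbr_sym by fastforce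
    then show ?thesis by simp
  next
    case 3
    then have "insert x F \<inter> nbr E z = F \<inter> nbr E z" using nbr_sym by fastforce
    then show ?thesis using F 3 by (simp add: dissociation_set_iff[OF G])
  qed
qed

lemma dissociation_set_insert_pair:
  assumes G: "simple_graph V E" and R: "dissociation_set V E R" and "x \<in> V" "y \<in> V"
    and R_x: "R \<inter> nbr E x = {}" and R_y: "R \<inter> nbr E y = {}"
  shows "dissociation_set V E (insert x (insert y R))"
proof (rule dissociation_set_insert[OF G _ \<open>x \<in> V\<close>])
  show "dissociation_set V E (insert y R)"
    by (rule dissociation_set_insert[OF G R \<open>y \<in> V\<close>]) (simp_all add: R_y)
  have "insert y R \<inter> nbr E x \<subseteq> {y}" using R_x by blast
  then show "card (insert y R \<inter> nbr E x) \<le> 1"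
    using card_mono[of "{y}"] by fastforce
  show "\<forall>z\<in>insert y R \<inter> nbr E x. insert y R \<inter> nbr E z = {}"
    using R_x R_y nbr_irrefl[OF G, of y] by blast
qed

lemma finite_dissociation_sets:
  "simple_graph V E \<Longrightarrow> finite {F. dissociation_set V E F}"
  by (rule finite_subset[of _ "Pow V"]) (auto simp: dissociation_set_def simple_graph_def)

lemma card_le_dissociation_number:
  "simple_graph V E \<Longrightarrow> dissociation_set V E F \<Longrightarrow> card F \<le> dissociation_number V E"
  unfolding dissociation_number_def using finite_dissociation_sets by fastforce

lemma finite_max_dissociation_sets:
  "simple_graph V E \<Longrightarrow> finite (max_dissociation_sets V E)"
  unfolding max_dissociation_sets_def by (simp add: finite_dissociation_sets)

lemma Phi_eq_Phi_bar_Phi0_Phi1: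
  assumes "simple_graph V E"
  shows "Phi V E = Phi_bar V E v + Phi0 V E v + Phi1 V E v"
proof -
  let ?MD = "max_dissociation_sets V E"
  let ?deg = "\<lambda>F. degree (induced_edges E F) v"
  have fin: "finite ?MD" using finite_max_dissociation_sets[OF assms] .
  have "?MD = {F\<in>?MD. v \<notin> F} \<union> {F\<in>?MD. v \<in> F \<and> ?deg F = 0} \<union> {F\<in>?MD. v \<in> F \<and> ?deg F = 1}"
    by (auto simp: max_dissociation_sets_def dissociation_set_def le_Suc_eq)
  also have "card \<dots> = Phi_bar V E v + Phi0 V E v + Phi1 V E v"
    unfolding Phi_bar_def Phi0_def Phi1_def using fin
    by (subst card_Un_disjoint; auto)+
  finally show ?thesis by (simp add: Phi_def)
qed

lemma dissociation_set_nbr_singleton: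
  assumes G: "simple_graph V E" and F: "dissociation_set V E F"
    and "x \<in> F" and "y \<in> F \<inter> nbr E x"
  shows "F \<inter> nbr E x = {y}"
proof -
  have "card (F \<inter> nbr E x) \<le> 1" using F \<open>x \<in> F\<close> by (simp add: dissociation_set_iff[OF G])
  then show ?thesis
    using \<open>y \<in> F \<inter> nbr E x\<close> dissociation_set_finite[OF G F] by (auto simp: card_le_Suc0_iff_eq)
qed

lemma leaf_nbr_singleton:
  assumes "simple_graph V E" and "leaf E v"
  obtains u where "nbr E v = {u}"
  using assms degree_eq_card_nbr[of E v]
  by (auto simp: simple_graph_def leaf_def card_1_singleton_iff)

locale leaf_with_support =
  fixes V :: "'a set" and E :: "'a set set" and v u :: 'a
  assumes graph: "simple_graph V E" and leaf_in_V: "v \<in> V" and nbr_leaf: "nbr E v = {u}"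
begin

lemma support_ne_leaf: "u \<noteq> v"
  using nbr_irrefl[OF graph, of v] nbr_leaf by auto

lemma leaf_in_nbr_iff: "v \<in> nbr E x \<longleftrightarrow> x = u"
  using nbr_leaf nbr_sym by fastforce

lemma degree_induced_leaf:
  "v \<in> F \<Longrightarrow> degree (induced_edges E F) v = (if u \<in> F then 1 else 0)"
  by (simp add: degree_induced_edges[OF graph] nbr_leaf)

lemma max_dissociation_set_without_leaf:
  assumes F: "F \<in> max_dissociation_sets V E" and "v \<notin> F"
  shows "u \<in> F \<and> (\<exists>w. F \<inter> nbr E u = {w})"
proof -
  have F_ds: "dissociation_set V E F" using F by (simp add: max_dissociation_sets_def)
  have "card (insert v F) > dissociation_number V E"
    using F \<open>v \<notin> F\<close> dissociation_set_finite[OF graph F_ds] by (simp add: max_dissociation_sets_def)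
  then have "\<not> dissociation_set V E (insert v F)"
    using card_le_dissociation_number[OF graph] by (meson leD)
  moreover have "card (F \<inter> nbr E v) \<le> 1" by (simp add: nbr_leaf card_le_Suc0_iff_eq)
  ultimately have "\<exists>y\<in>F \<inter> nbr E v. F \<inter> nbr E y \<noteq> {}"
    using dissociation_set_insert[OF graph F_ds leaf_in_V] by blast
  then obtain w where "u \<in> F" "w \<in> F \<inter> nbr E u" using nbr_leaf by auto
  then show ?thesis using dissociation_set_nbr_singleton[OF graph F_ds] by blast
qed

lemma swap_support_for_leaf:
  assumes F: "F \<in> max_dissociation_sets V E" and "v \<notin> F"
  shows "insert v (F - {u}) \<in> max_dissociation_sets V E"
proof -
  have F_ds: "dissociation_set V E F" using F by (simp add: max_dissociation_sets_def)
  have "dissociation_set V E (F - {u})" by (rule dissociation_set_subset[OF graph F_ds]) auto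
  then have "dissociation_set V E (insert v (F - {u}))"
    by (rule dissociation_set_insert[OF graph _ leaf_in_V]) (auto simp: nbr_leaf)
  moreover have "u \<in> F" using max_dissociation_set_without_leaf[OF assms] by blast
  moreover have "card (insert v (F - {u})) = card F"
    by (rule card_exchange[OF dissociation_set_finite[OF graph F_ds] \<open>u \<in> F\<close> \<open>v \<notin> F\<close>])
  ultimately show ?thesis using F by (simp add: max_dissociation_sets_def)
qed

lemma swap_partner_for_leaf:
  assumes F: "F \<in> max_dissociation_sets V E" and "v \<notin> F"
  shows "insert v (F - nbr E u) \<in> max_dissociation_sets V E"
proof -
  have F_ds: "dissociation_set V E F" using F by (simp add: max_dissociation_sets_def)
  obtain w where "u \<in> F" and w: "F \<inter> nbr E u = {w}"
    using max_dissociation_set_without_leaf[OF assms] by blast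
  then have F_w: "F - nbr E u = F - {w}" and "w \<in> F" by auto
  have "dissociation_set V E (F - nbr E u)" by (rule dissociation_set_subset[OF graph F_ds]) auto
  moreover have "(F - nbr E u) \<inter> nbr E v = {u}"
    using \<open>u \<in> F\<close> nbr_leaf nbr_irrefl[OF graph, of u] by auto
  ultimately have "dissociation_set V E (insert v (F - nbr E u))"
    by (intro dissociation_set_insert[OF graph _ leaf_in_V]) auto
  moreover have "card (insert v (F - nbr E u)) = card F"
    unfolding F_w by (rule card_exchange[OF dissociation_set_finite[OF graph F_ds] \<open>w \<in> F\<close> \<open>v \<notin> F\<close>])
  ultimately show ?thesis using F by (simp add: max_dissociation_sets_def)
qed

lemma inj_on_Diff_nbr_support:
  "inj_on (\<lambda>F. F - nbr E u) {F \<in> max_dissociation_sets V E. v \<notin> F}"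
proof (rule inj_onI, rule ccontr)
  fix F1 F2
  assume "F1 \<in> {F \<in> max_dissociation_sets V E. v \<notin> F}" "F2 \<in> {F \<in> max_dissociation_sets V E. v \<notin> F}"
  then have F1: "F1 \<in> max_dissociation_sets V E" "v \<notin> F1"
    and F2: "F2 \<in> max_dissociation_sets V E" "v \<notin> F2" by simp_all
  assume same_rest: "F1 - nbr E u = F2 - nbr E u" and "F1 \<noteq> F2"
  have F1_ds: "dissociation_set V E F1" and F2_ds: "dissociation_set V E F2"
    using F1 F2 by (simp_all add: max_dissociation_sets_def)
  obtain w1 where "u \<in> F1" and w1: "F1 \<inter> nbr E u = {w1}"
    using max_dissociation_set_without_leaf[OF F1] by blast
  obtain w2 where "u \<in> F2" and w2: "F2 \<inter> nbr E u = {w2}"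
    using max_dissociation_set_without_leaf[OF F2] by blast
  have "insert w1 (F1 - nbr E u) = F1" "insert w2 (F2 - nbr E u) = F2"
    using w1 w2 by auto
  then have "w1 \<noteq> w2" using \<open>F1 \<noteq> F2\<close> same_rest by metis
  have "u \<notin> nbr E u" using nbr_irrefl[OF graph] .
  then have "u \<noteq> w1" "u \<noteq> w2" using w1 w2 by auto
  have "F1 \<inter> nbr E w1 = {u}" "F2 \<inter> nbr E w2 = {u}"
    using dissociation_set_nbr_singleton[OF graph] F1_ds F2_ds w1 w2 \<open>u \<in> F1\<close> \<open>u \<in> F2\<close> nbr_sym
    by (metis Int_iff insertI1)+
  define R where "R = F1 - nbr E u - {u}"
  have R_w1: "R \<inter> nbr E w1 = {}" and R_w2: "R \<inter> nbr E w2 = {}"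
    using \<open>F1 \<inter> nbr E w1 = {u}\<close> \<open>F2 \<inter> nbr E w2 = {u}\<close> same_rest by (auto simp: R_def)
  have "w1 \<in> V" "w2 \<in> V"
    using w1 w2 F1_ds F2_ds by (auto simp: dissociation_set_def)
  have "dissociation_set V E R" by (rule dissociation_set_subset[OF graph F1_ds]) (auto simp: R_def)
  then have "dissociation_set V E (insert w1 (insert w2 R))"
    using dissociation_set_insert_pair[OF graph _ \<open>w1 \<in> V\<close> \<open>w2 \<in> V\<close> R_w1 R_w2] by blast
  then have "dissociation_set V E (insert v (insert w1 (insert w2 R)))"
    by (rule dissociation_set_insert[OF graph _ leaf_in_V])
      (use \<open>u \<noteq> w1\<close> \<open>u \<noteq> w2\<close> in \<open>auto simp: nbr_leaf R_def\<close>)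
  moreover have "card (insert v (insert w1 (insert w2 R))) = card F1 + 1"
  proof -
    have "finite R" using dissociation_set_finite[OF graph F1_ds] by (simp add: R_def)
    moreover have "F1 = insert u (insert w1 R)" using w1 \<open>u \<in> F1\<close> by (auto simp: R_def)
    moreover have "v \<notin> R" "w1 \<notin> R" "w2 \<notin> R" "u \<notin> R" "v \<noteq> w1" "v \<noteq> w2"
      using w1 w2 F1(2) F2(2) by (auto simp: R_def)
    ultimately show ?thesis using \<open>w1 \<noteq> w2\<close> \<open>u \<noteq> w1\<close> by simp
  qed
  ultimately show False
    using F1 card_le_dissociation_number[OF graph] by (fastforce simp: max_dissociation_sets_def)
qed

lemma Phi_bar_le_Phi0: "Phi_bar V E v \<le> Phi0 V E v"
proof -
  let ?A = "{F \<in> max_dissociation_sets V E. v \<notin> F}"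
  let ?swap = "\<lambda>F. insert v (F - {u})"
  have "inj_on ?swap ?A"
  proof (rule inj_on_inverseI[where g = "\<lambda>F. insert u (F - {v})"])
    fix F assume "F \<in> ?A"
    then show "insert u (?swap F - {v}) = F"
      using max_dissociation_set_without_leaf support_ne_leaf by auto
  qed
  moreover have "?swap ` ?A \<subseteq> {F \<in> max_dissociation_sets V E. v \<in> F \<and> degree (induced_edges E F) v = 0}"
    using swap_support_for_leaf support_ne_leaf by (auto simp: degree_induced_leaf)
  ultimately show ?thesis
    unfolding Phi_bar_def Phi0_def using finite_max_dissociation_sets[OF graph]
    by (intro card_inj_on_le) auto
qed

lemma Phi_bar_le_Phi1: "Phi_bar V E v \<le> Phi1 V E v"
proof -
  let ?A = "{F \<in> max_dissociation_sets V E. v \<notin> F}"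
  let ?swap = "\<lambda>F. insert v (F - nbr E u)"
  have "v \<in> nbr E u" by (simp add: leaf_in_nbr_iff)
  have "inj_on ?swap ?A"
  proof (rule inj_onI)
    fix F1 F2 assume F1: "F1 \<in> ?A" and F2: "F2 \<in> ?A" and same_swap: "?swap F1 = ?swap F2"
    have "F1 - nbr E u = ?swap F1 - {v}" using \<open>v \<in> nbr E u\<close> by auto
    also have "\<dots> = F2 - nbr E u" using same_swap \<open>v \<in> nbr E u\<close> by auto
    finally show "F1 = F2" by (rule inj_onD[OF inj_on_Diff_nbr_support _ F1 F2])
  qed
  moreover have "?swap F \<in> {F \<in> max_dissociation_sets V E. v \<in> F \<and> degree (induced_edges E F) v = 1}"
    if F: "F \<in> ?A" for F
  proof -
    have "u \<in> F" using F max_dissociation_set_without_leaf by blast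
    then have "u \<in> ?swap F" using nbr_irrefl[OF graph, of u] by simp
    then show ?thesis using F swap_partner_for_leaf by (simp add: degree_induced_leaf)
  qed
  then have "?swap ` ?A \<subseteq> {F \<in> max_dissociation_sets V E. v \<in> F \<and> degree (induced_edges E F) v = 1}"
    by blast
  ultimately show ?thesis
    unfolding Phi_bar_def Phi1_def using finite_max_dissociation_sets[OF graph]
    by (intro card_inj_on_le) auto
qed

end

theorem lemma3p1:
  fixes V :: "'a set" and E :: "'a set set" and v :: 'a
  assumes "tree V E"
    and "v \<in> V" and "leaf E v"
    and "dissociation_number (V - {v}) (delete_vertex_edges E v) = dissociation_number V E"
  shows "Phi_bar V E v \<le> min (Phi0 V E v) (Phi1 V E v)
         \<and> 3 * Phi_bar V E v \<le> Phi V E"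
proof -
  have graph: "simple_graph V E" using \<open>tree V E\<close> by (simp add: tree_def)
  obtain u where "nbr E v = {u}" using leaf_nbr_singleton[OF graph \<open>leaf E v\<close>] .
  then interpret leaf_with_support V E v u
    using graph \<open>v \<in> V\<close> by unfold_locales
  show ?thesis
    using Phi_bar_le_Phi0 Phi_bar_le_Phi1 Phi_eq_Phi_bar_Phi0_Phi1[OF graph, of v] by simp
qed

end
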